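(* For the modified EnvZ/OmpR network described in the context, with rate constants $k_1,\dots,k_{16}$ treated as symbols: (i) there are no nonzero type 1 complex-linear invariants on $\{C_7,C_8,C_{11},C_{14}\}$; (ii) for each $i\in\{1,2,3\}$ the space of type 1 complex-linear invariants on $\{C_i,C_7,C_8,C_{11},C_{14}\}$ has dimension $1$, spanned respectively by \[k_{16}x^{C_{14}}-\frac{k_1k_3k_5}{k_2(k_4+k_5)}x^{C_1}+\frac{k_{10}k_{12}}{k_{11}+k_{12}}x^{C_8}+\frac{k_{13}k_{15}}{k_{14}+k_{15}}x^{C_{11}},\] \[k_{16}x^{C_{14}}-\frac{k_3k_5}{k_4+k_5}x^{C_2}+\frac{k_{10}k_{12}}{k_{11}+k_{12}}x^{C_8}+\frac{k_{13}k_{15}}{k_{14}+k_{15}}x^{C_{11}},\] \[k_{16}x^{C_{14}}-k_5x^{C_3}+\frac{k_{10}k_{12}}{k_{11}+k_{12}}x^{C_8}+\frac{k_{13}k_{15}}{k_{14}+k_{15}}x^{C_{11}};\] in particular each of these expressions vanishes at every steady state for all positive values of the rate constants.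
   Context: The modified EnvZ/OmpR network has mass-action kinetics and reactions $\mathrm{EnvZ\text{-}ADP}\underset{k_2}{\overset{k_1}{\rightleftharpoons}}\mathrm{EnvZ}\underset{k_4}{\overset{k_3}{\rightleftharpoons}}\mathrm{EnvZ\text{-}ATP}\xrightarrow{k_5}\mathrm{EnvZ\text{-}P}$; $\mathrm{EnvZ\text{-}P}+\mathrm{OmpR}\underset{k_7}{\overset{k_6}{\rightleftharpoons}}\mathrm{EnvZ\text{-}P\text{-}OmpR}\underset{k_9}{\overset{k_8}{\rightleftharpoons}}\mathrm{EnvZ}+\mathrm{OmpR\text{-}P}$; $\mathrm{EnvZ\text{-}ATP}+\mathrm{OmpR\text{-}P}\underset{k_{11}}{\overset{k_{10}}{\rightleftharpoons}}\mathrm{EnvZ\text{-}ATP\text{-}OmpR\text{-}P}\xrightarrow{k_{12}}\mathrm{EnvZ\text{-}ATP}+\mathrm{OmpR}$; $\mathrm{EnvZ\text{-}ADP}+\mathrm{OmpR\text{-}P}\underset{k_{14}}{\overset{k_{13}}{\rightleftharpoons}}\mathrm{EnvZ\text{-}ADP\text{-}OmpR\text{-}P}\xrightarrow{k_{15}}\mathrm{EnvZ\text{-}ADP}+\mathrm{OmpR}$; $\mathrm{OmpR\text{-}P}\xrightarrow{k_{16}}\mathrm{OmpR}$ (here $A\underset{k'}{\overset{k}{\rightleftharpoons}}B$ means $A\xrightarrow{k}B$ and $B\xrightarrow{k'}A$; hyphenated names are single species). Complexes are numbered $C_1=\mathrm{EnvZ\text{-}ADP}$, $C_2=\mathrm{EnvZ}$,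 $C_3=\mathrm{EnvZ\text{-}ATP}$, $C_4=\mathrm{EnvZ\text{-}P}$, $C_5=\mathrm{EnvZ\text{-}P}+\mathrm{OmpR}$, $C_6=\mathrm{EnvZ\text{-}P\text{-}OmpR}$, $C_7=\mathrm{EnvZ}+\mathrm{OmpR\text{-}P}$, $C_8=\mathrm{EnvZ\text{-}ATP}+\mathrm{OmpR\text{-}P}$, $C_9=\mathrm{EnvZ\text{-}ATP\text{-}OmpR\text{-}P}$, $C_{10}=\mathrm{EnvZ\text{-}ATP}+\mathrm{OmpR}$, $C_{11}=\mathrm{EnvZ\text{-}ADP}+\mathrm{OmpR\text{-}P}$, $C_{12}=\mathrm{EnvZ\text{-}ADP\text{-}OmpR\text{-}P}$, $C_{13}=\mathrm{EnvZ\text{-}ADP}+\mathrm{OmpR}$, $C_{14}=\mathrm{OmpR\text{-}P}$, $C_{15}=\mathrm{OmpR}$. For concentrations $x$, $x^{C}=\prod_jx_j^{C(S_j)}$, $\Psi(x)=(x^{C_1},\dots,x^{C_{15}})^\top$, and the dynamics are $dx/dt=M\Psi(x)$ with $M=Y\mathcal{L}(G)$ ($Y$ has the complexes as columns; $\mathcal{L}(G)_{ji}=\kappa_{ij}$ for an edge $C_i\to C_j$ with rate constant $\kappa_{ij}$, $\mathcal{L}(G)_{ii}=-\sum_j\kappa_{ij}$, other entries $0$). A type 1 complex-linear invariant on selected complexes $C_{i_1},\dots,C_{i_k}$ is a polynomial $\sum_ra_rx^{C_{i_r}}$ such that the vector with entry $a_r$ at position $i_r$ and $0$ elsewhere lies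 in the row span of $M$. *)

theory Defs
  imports Complex_Main
begin

text \<open>Species (1-based):
  1 EnvZ-ADP, 2 EnvZ, 3 EnvZ-ATP, 4 EnvZ-P, 5 OmpR, 6 EnvZ-P-OmpR, 7 OmpR-P,
  8 EnvZ-ATP-OmpR-P, 9 EnvZ-ADP-OmpR-P.
  Complexes C1..C15 as in the paper, given as lists of species.
  Vectors/matrices are functions on nat, meaningful on the index ranges
  {1..9} (species) and {1..15} (complexes); rate constants k 1 .. k 16.\<close>

fun cplx :: "nat \<Rightarrow> nat list" where
  "cplx n = (if n = 1 then [1] else if n = 2 then [2] else if n = 3 then [3]
    else if n = 4 then [4] else if n = 5 then [4,5] else if n = 6 then [6]
    else if n = 7 then [2,7] else if n = 8 then [3,7] else if n = 9 then [8]
    else if n = 10 then [3,5] else if n = 11 then [1,7] else if n = 12 then [9]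
    else if n = 13 then [1,5] else if n = 14 then [7] else if n = 15 then [5]
    else [])"

definition Ystoich :: "nat \<Rightarrow> nat \<Rightarrow> nat" where
  "Ystoich s j = count_list (cplx j) s"

text \<open>Reaction edges (source complex, target complex, index of rate constant).\<close>
definition edges :: "(nat \<times> nat \<times> nat) list" where
  "edges = [(1,2,1),(2,1,2),(2,3,3),(3,2,4),(3,4,5),(5,6,6),(6,5,7),(6,7,8),
            (7,6,9),(8,9,10),(9,8,11),(9,10,12),(11,12,13),(12,11,14),(12,13,15),
            (14,15,16)]"

definition kappa :: "(nat \<Rightarrow> real) \<Rightarrow> nat \<Rightarrow> nat \<Rightarrow> real" where
  "kappa k i j = sum_list (map (\<lambda>(a,b,r). k r) (filter (\<lambda>(a,b,r). a = i \<and> b = j) edges))"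

definition Lap :: "(nat \<Rightarrow> real) \<Rightarrow> nat \<Rightarrow> nat \<Rightarrow> real" where
  "Lap k j i = (if j = i then - (\<Sum>l\<in>{1..15}. kappa k i l) else kappa k i j)"

definition Mmat :: "(nat \<Rightarrow> real) \<Rightarrow> nat \<Rightarrow> nat \<Rightarrow> real" where
  "Mmat k s i = (\<Sum>j\<in>{1..15}. real (Ystoich s j) * Lap k j i)"

definition Psi :: "(nat \<Rightarrow> real) \<Rightarrow> nat \<Rightarrow> real" where
  "Psi x j = (\<Prod>s\<in>{1..9}. x s ^ Ystoich s j)"

definition in_row_span :: "(nat \<Rightarrow> real) \<Rightarrow> (nat \<Rightarrow> real) \<Rightarrow> bool" where
  "in_row_span k a \<longleftrightarrow> (\<exists>c :: nat \<Rightarrow> real. \<forall>j\<in>{1..15}. a j = (\<Sum>s\<in>{1..9}. c s * Mmat k s j))"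

text \<open>Type 1 complex-linear invariants on the selected complexes I (I \<subseteq> {1..15}),
  identified with their coefficient vectors a (a_j = coefficient of x^{C_j},
  zero off I): the polynomial is sum_{j in I} a_j x^{C_j}.\<close>
definition type1_invariants :: "(nat \<Rightarrow> real) \<Rightarrow> nat set \<Rightarrow> (nat \<Rightarrow> real) set" where
  "type1_invariants k I = {a. (\<forall>j. j \<notin> I \<longrightarrow> a j = 0) \<and> in_row_span k a}"

definition steady_state :: "(nat \<Rightarrow> real) \<Rightarrow> (nat \<Rightarrow> real) \<Rightarrow> bool" where
  "steady_state k x \<longleftrightarrow> (\<forall>s\<in>{1..9}. x s \<ge> 0) \<and>
     (\<forall>s\<in>{1..9}. (\<Sum>j\<in>{1..15}. Mmat k s j * Psi x j) = 0)"

end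

theory Submission
  imports Defs
begin

(* A vector a lies in the row span of M = Y L iff a = c^T Y L for some species weights c.
   Writing phi_l = <c, y_l> for the "potential" of complex C_l, the j-th entry of c^T Y L
   is sum_l kappa_jl (phi_l - phi_j); evaluated on this network it is the explicit
   linear form row_comb k c j.  Solving a_j = row_comb k c j with a vanishing off the
   complexes {1,2,3,7,8,11,14} leaves three free parameters (e1, e3, u), the potential
   differences c1 - c2, c3 - c2 and c5 - c7: the invariants supported there form the
   three-parameter family invariant_family k e1 e3 u.  Demanding in addition that two of
   the EnvZ complexes C1, C2, C3 drop out forces e1, e3 to be fixed multiples of u, which
   leaves the one-dimensional span of basis_invariant k i; demanding that all three drop
   out forces u = 0.  Finally, every vector in the row span of M annihilates M Psi(x) = 0,
   so each basis invariant vanishes at every steady state. *)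

(* The complexes, listed explicitly so that sums over them can be evaluated. *)
lemma complexes_range: "{1..15::nat} = {1,2,3,4,5,6,7,8,9,10,11,12,13,14,15}"
  by (auto; presburger)

(* The network has no self-loops, so the diagonal of the Laplacian is minus the out-flow. *)
lemma kappa_no_loops: "kappa k j j = 0"
  unfolding kappa_def edges_def by auto

definition potential :: "(nat \<Rightarrow> real) \<Rightarrow> nat \<Rightarrow> real" where
  "potential c l = (\<Sum>s\<in>{1..9}. c s * real (Ystoich s l))"

lemma weighted_count_sum_list:
  fixes c :: "'a \<Rightarrow> real"
  assumes "finite S" "set xs \<subseteq> S"
  shows "(\<Sum>s\<in>S. c s * real (count_list xs s)) = sum_list (map c xs)"
  using assms(2)
proof (induction xs)
  case (Cons x xs)
  have "(\<Sum>s\<in>S. c s * real (count_list (x # xs) s))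
      = (\<Sum>s\<in>S. c s * real (count_list xs s)) + (\<Sum>s\<in>S. if x = s then c s else 0)"
    by (auto simp add: sum.distrib[symmetric] distrib_left intro!: sum.cong)
  also have "\<dots> = sum_list (map c (x # xs))"
    using Cons assms(1) by simp
  finally show ?case .
qed simp

lemma potential_cplx: "potential c l = sum_list (map c (cplx l))"
  unfolding potential_def Ystoich_def
  by (rule weighted_count_sum_list) auto

lemma row_combination_potential:
  assumes "j \<in> {1..15}"
  shows "(\<Sum>s\<in>{1..9}. c s * Mmat k s j) = (\<Sum>l\<in>{1..15}. kappa k j l * (potential c l - potential c j))"
proof -
  have Lap_col: "Lap k m j = kappa k j m - (if m = j then (\<Sum>l\<in>{1..15}. kappa k j l) else 0)" for m
    by (simp add: Lap_def kappa_no_loops)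
  have "(\<Sum>s\<in>{1..9}. c s * Mmat k s j) = (\<Sum>m\<in>{1..15}. potential c m * Lap k m j)"
    unfolding Mmat_def potential_def sum_distrib_left sum_distrib_right
    by (subst sum.swap) (simp add: mult.assoc mult.left_commute)
  also have "\<dots> = (\<Sum>m\<in>{1..15}. kappa k j m * potential c m)
      - (\<Sum>m\<in>{1..15}. (if m = j then potential c j * (\<Sum>l\<in>{1..15}. kappa k j l) else 0))"
    unfolding Lap_col right_diff_distrib sum_subtractf by (simp add: mult.commute if_distrib)
  also have "\<dots> = (\<Sum>m\<in>{1..15}. kappa k j m * potential c m) - potential c j * (\<Sum>l\<in>{1..15}. kappa k j l)"
    using assms by simp
  also have "\<dots> = (\<Sum>l\<in>{1..15}. kappa k j l * (potential c l - potential c j))"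
    by (simp add: right_diff_distrib sum_subtractf sum_distrib_left mult.commute)
  finally show ?thesis .
qed

lemma kappa_table: "kappa k i l =
   (if i = 1 \<and> l = 2 then k 1 else if i = 2 \<and> l = 1 then k 2 else if i = 2 \<and> l = 3 then k 3
    else if i = 3 \<and> l = 2 then k 4 else if i = 3 \<and> l = 4 then k 5 else if i = 5 \<and> l = 6 then k 6
    else if i = 6 \<and> l = 5 then k 7 else if i = 6 \<and> l = 7 then k 8 else if i = 7 \<and> l = 6 then k 9
    else if i = 8 \<and> l = 9 then k 10 else if i = 9 \<and> l = 8 then k 11 else if i = 9 \<and> l = 10 then k 12
    else if i = 11 \<and> l = 12 then k 13 else if i = 12 \<and> l = 11 then k 14
    else if i = 12 \<and> l = 13 then k 15 else if i = 14 \<and> l = 15 then k 16 else 0)"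
  unfolding kappa_def edges_def by auto

definition row_comb :: "(nat \<Rightarrow> real) \<Rightarrow> (nat \<Rightarrow> real) \<Rightarrow> nat \<Rightarrow> real" where
  "row_comb k c j =
    (if j = 1 then k 1 * (c 2 - c 1)
     else if j = 2 then k 2 * (c 1 - c 2) + k 3 * (c 3 - c 2)
     else if j = 3 then k 4 * (c 2 - c 3) + k 5 * (c 4 - c 3)
     else if j = 5 then k 6 * (c 6 - c 4 - c 5)
     else if j = 6 then k 7 * (c 4 + c 5 - c 6) + k 8 * (c 2 + c 7 - c 6)
     else if j = 7 then k 9 * (c 6 - c 2 - c 7)
     else if j = 8 then k 10 * (c 8 - c 3 - c 7)
     else if j = 9 then k 11 * (c 3 + c 7 - c 8) + k 12 * (c 3 + c 5 - c 8)
     else if j = 11 then k 13 * (c 9 - c 1 - c 7)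
     else if j = 12 then k 14 * (c 1 + c 7 - c 9) + k 15 * (c 1 + c 5 - c 9)
     else if j = 14 then k 16 * (c 5 - c 7) else 0)"

lemma row_comb_eq:
  assumes "j \<in> {1..15}"
  shows "(\<Sum>s\<in>{1..9}. c s * Mmat k s j) = row_comb k c j"
  using assms unfolding row_combination_potential[OF assms] complexes_range
  by (elim insertE) (simp_all add: kappa_table potential_cplx row_comb_def algebra_simps)

lemma in_row_span_iff: "in_row_span k a \<longleftrightarrow> (\<exists>c. \<forall>j\<in>{1..15}. a j = row_comb k c j)"
  unfolding in_row_span_def using row_comb_eq by auto

(* Every vector in the row span of M gives a polynomial vanishing at steady states,
   since a^T Psi(x) = c^T (M Psi(x)). *)
lemma row_span_vanishes_at_steady_state:
  assumes "in_row_span k a" "steady_state k x"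
  shows "(\<Sum>j\<in>{1..15}. a j * Psi x j) = 0"
proof -
  obtain c where c: "\<forall>j\<in>{1..15}. a j = (\<Sum>s\<in>{1..9}. c s * Mmat k s j)"
    using assms(1) unfolding in_row_span_def by blast
  have "(\<Sum>j\<in>{1..15}. a j * Psi x j) = (\<Sum>j\<in>{1..15}. \<Sum>s\<in>{1..9}. c s * (Mmat k s j * Psi x j))"
    using c by (simp add: sum_distrib_right mult.assoc)
  also have "\<dots> = (\<Sum>s\<in>{1..9}. c s * (\<Sum>j\<in>{1..15}. Mmat k s j * Psi x j))"
    by (subst sum.swap) (simp add: sum_distrib_left)
  also have "\<dots> = 0"
    using assms(2) unfolding steady_state_def by simp
  finally show ?thesis .
qed

lemma type1_invariants_restrict:
  assumes "I \<subseteq> S"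
  shows "type1_invariants k I = {a \<in> type1_invariants k S. \<forall>j\<in>S - I. a j = 0}"
  using assms unfolding type1_invariants_def by auto

(* The invariants supported on {C1, C2, C3, C7, C8, C11, C14}, parametrised by the potential
   differences e1 = c1 - c2, e3 = c3 - c2 and u = c5 - c7. *)
definition invariant_family :: "(nat \<Rightarrow> real) \<Rightarrow> real \<Rightarrow> real \<Rightarrow> real \<Rightarrow> nat \<Rightarrow> real" where
  "invariant_family k e1 e3 u = (\<lambda>_. 0)(1 := - k 1 * e1, 2 := k 2 * e1 + k 3 * e3,
     3 := - (k 4 + k 5) * e3 - k 5 * u, 8 := k 10 * k 12 / (k 11 + k 12) * u,
     11 := k 13 * k 15 / (k 14 + k 15) * u, 14 := k 16 * u)"

lemma invariant_family_realised:
  assumes kpos: "\<forall>i\<in>{1..16}. k i > 0"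
  shows "invariant_family k e1 e3 u \<in> type1_invariants k {1, 2, 3, 7, 8, 11, 14}"
proof -
  have kp: "k 11 + k 12 > 0" "k 14 + k 15 > 0"
    using kpos by (auto intro: add_pos_pos)
  define c :: "nat \<Rightarrow> real" where "c = (\<lambda>_. 0)(1 := e1, 3 := e3, 4 := - u, 5 := u,
    8 := e3 + k 12 / (k 11 + k 12) * u, 9 := e1 + k 15 / (k 14 + k 15) * u)"
  have "\<forall>j\<in>{1..15}. invariant_family k e1 e3 u j = row_comb k c j"
    unfolding complexes_range using kp
    by (simp add: invariant_family_def row_comb_def c_def field_simps)
  moreover have "\<forall>j. j \<notin> {1, 2, 3, 7, 8, 11, 14} \<longrightarrow> invariant_family k e1 e3 u j = 0"
    by (simp add: invariant_family_def)
  ultimately show ?thesis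
    unfolding type1_invariants_def in_row_span_iff by blast
qed

(* The invariants on {C1, C2, C3, C7, C8, C11, C14} are exactly the family above: vanishing at
   C5, C6, C9, C12 determines c4, c6, c8, c9 from the other weights, which forces the
   C7-entry to be zero and the remaining entries to be those of the family. *)
lemma type1_invariants_core:
  assumes kpos: "\<forall>i\<in>{1..16}. k i > 0"
  shows "type1_invariants k {1, 2, 3, 7, 8, 11, 14} = {invariant_family k e1 e3 u | e1 e3 u. True}"
proof (intro equalityI subsetI)
  have kp: "k 6 > 0" "k 8 > 0" "k 11 + k 12 > 0" "k 14 + k 15 > 0"
    using kpos by (auto intro: add_pos_pos)
  fix a assume "a \<in> type1_invariants k {1, 2, 3, 7, 8, 11, 14}"
  then obtain c where off: "\<forall>j. j \<notin> {1, 2, 3, 7, 8, 11, 14} \<longrightarrow> a j = 0"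
    and row: "\<forall>j\<in>{1..15}. a j = row_comb k c j"
    unfolding type1_invariants_def in_row_span_iff by blast
  have eq: "row_comb k c j = 0" if "j \<in> {5, 6, 9, 12}" for j
    using that off row[rule_format, of j] by auto
  have c6: "c 6 = c 4 + c 5"
    using eq[of 5] kp by (simp add: row_comb_def)
  have c6_alt: "c 6 = c 2 + c 7"
    using eq[of 6] c6 kp by (simp add: row_comb_def)
  then have c4: "c 4 = c 2 - (c 5 - c 7)"
    using c6 by simp
  have "(k 11 + k 12) * (c 8 - c 3 - c 7) = k 12 * (c 5 - c 7)"
    using eq[of 9] by (simp add: row_comb_def algebra_simps)
  then have c8: "c 8 - c 3 - c 7 = k 12 / (k 11 + k 12) * (c 5 - c 7)"
    using kp by (simp add: field_simps)
  have "(k 14 + k 15) * (c 9 - c 1 - c 7) = k 15 * (c 5 - c 7)"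
    using eq[of 12] by (simp add: row_comb_def algebra_simps)
  then have c9: "c 9 - c 1 - c 7 = k 15 / (k 14 + k 15) * (c 5 - c 7)"
    using kp by (simp add: field_simps)
  have "a j = invariant_family k (c 1 - c 2) (c 3 - c 2) (c 5 - c 7) j" for j
  proof (cases "j \<in> {1, 2, 3, 7, 8, 11, 14}")
    case True
    then show ?thesis
      using row c6_alt c8 c9 by (auto simp: row_comb_def invariant_family_def c4 algebra_simps)
  qed (use off in \<open>auto simp: invariant_family_def\<close>)
  then show "a \<in> {invariant_family k e1 e3 u | e1 e3 u. True}"
    by blast
next
  fix a assume "a \<in> {invariant_family k e1 e3 u | e1 e3 u. True}"
  then show "a \<in> type1_invariants k {1, 2, 3, 7, 8, 11, 14}"
    using invariant_family_realised[OF kpos] by blast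
qed

definition chain_coeff :: "(nat \<Rightarrow> real) \<Rightarrow> nat \<Rightarrow> real" where
  "chain_coeff k i = (if i = 1 then k 1 * k 3 * k 5 / (k 2 * (k 4 + k 5))
     else if i = 2 then k 3 * k 5 / (k 4 + k 5) else k 5)"

definition basis_invariant :: "(nat \<Rightarrow> real) \<Rightarrow> nat \<Rightarrow> nat \<Rightarrow> real" where
  "basis_invariant k i = (\<lambda>_. 0)(i := - chain_coeff k i, 8 := k 10 * k 12 / (k 11 + k 12),
     11 := k 13 * k 15 / (k 14 + k 15), 14 := k 16)"

(* For an invariant on {C_i, C7, C8, C11, C14}, the potential differences e1 and e3 along the
   EnvZ chain C1 - C2 - C3 are the following multiples of u. *)
definition chain_e1 :: "(nat \<Rightarrow> real) \<Rightarrow> nat \<Rightarrow> real" where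
  "chain_e1 k i = (if i = 1 then k 3 * k 5 / (k 2 * (k 4 + k 5)) else 0)"

definition chain_e3 :: "(nat \<Rightarrow> real) \<Rightarrow> nat \<Rightarrow> real" where
  "chain_e3 k i = (if i = 3 then 0 else - k 5 / (k 4 + k 5))"

lemma family_vanishing_on_chain:
  assumes kpos: "\<forall>i\<in>{1..16}. k i > 0" and i: "i \<in> {1, 2, 3}"
    and zero: "\<forall>j\<in>{1, 2, 3} - {i}. invariant_family k e1 e3 u j = 0"
  shows "e1 = chain_e1 k i * u \<and> e3 = chain_e3 k i * u"
proof -
  have kp: "k 1 > 0" "k 2 > 0" "k 3 > 0" "k 4 + k 5 > 0" "k 2 * (k 4 + k 5) > 0"
    using kpos by (auto intro!: add_pos_pos mult_pos_pos)
  have phos: "e3 = - k 5 / (k 4 + k 5) * u" if "invariant_family k e1 e3 u 3 = 0"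
    using that kp by (simp add: invariant_family_def field_simps)
  from i consider "i = 1" | "i = 2" | "i = 3" by auto
  then show ?thesis
  proof cases
    case 1
    then have "invariant_family k e1 e3 u 2 = 0" "invariant_family k e1 e3 u 3 = 0"
      using zero by auto
    then have e3: "(k 4 + k 5) * e3 = - k 5 * u" and e1: "k 2 * e1 = - k 3 * e3"
      by (simp_all add: invariant_family_def algebra_simps)
    have "k 2 * (k 4 + k 5) * e1 = - k 3 * ((k 4 + k 5) * e3)"
      using e1 by (metis mult.assoc mult.left_commute mult_minus_left)
    also have "\<dots> = k 3 * k 5 * u"
      using e3 by simp
    finally have "e1 = k 3 * k 5 / (k 2 * (k 4 + k 5)) * u"
      using kp by (simp add: field_simps)
    with phos 1 show ?thesis
      using \<open>invariant_family k e1 e3 u 3 = 0\<close> by (simp add: chain_e1_def chain_e3_def)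
  next
    case 2
    then have "invariant_family k e1 e3 u 1 = 0" "invariant_family k e1 e3 u 3 = 0"
      using zero by auto
    with 2 phos kp show ?thesis
      by (simp add: invariant_family_def chain_e1_def chain_e3_def)
  next
    case 3
    then have "invariant_family k e1 e3 u 1 = 0" "invariant_family k e1 e3 u 2 = 0"
      using zero by auto
    with 3 kp show ?thesis
      by (simp add: invariant_family_def chain_e1_def chain_e3_def)
  qed
qed

lemma family_on_chain_is_basis:
  assumes kpos: "\<forall>i\<in>{1..16}. k i > 0" and i: "i \<in> {1, 2, 3}"
  shows "invariant_family k (chain_e1 k i * u) (chain_e3 k i * u) u = (\<lambda>j. u * basis_invariant k i j)"
proof -
  have kp: "k 2 > 0" "k 4 + k 5 > 0" "k 2 * (k 4 + k 5) > 0"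
    using kpos by (auto intro!: add_pos_pos mult_pos_pos)
  from i show ?thesis
    using kp by (intro ext) (auto simp: invariant_family_def basis_invariant_def chain_coeff_def
        chain_e1_def chain_e3_def field_simps)
qed

lemma type1_invariants_one_chain_complex:
  assumes kpos: "\<forall>i\<in>{1..16}. k i > 0" and i: "i \<in> {1, 2, 3}"
  shows "type1_invariants k {i, 7, 8, 11, 14} = {(\<lambda>j. t * basis_invariant k i j) | t. True}"
proof -
  have sub: "{i, 7, 8, 11, 14} \<subseteq> {1, 2, 3, 7, 8, 11, 14}"
    and diff: "{1, 2, 3, 7, 8, 11, 14} - {i, 7, 8, 11, 14} = {1, 2, 3} - {i}"
    using i by auto
  have "type1_invariants k {i, 7, 8, 11, 14}
      = {a. \<exists>e1 e3 u. a = invariant_family k e1 e3 u \<and> (\<forall>j\<in>{1, 2, 3} - {i}. a j = 0)}"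
    unfolding type1_invariants_restrict[OF sub] type1_invariants_core[OF kpos] diff by blast
  also have "\<dots> = {(\<lambda>j. t * basis_invariant k i j) | t. True}"
  proof (intro equalityI subsetI)
    fix a assume "a \<in> {a. \<exists>e1 e3 u. a = invariant_family k e1 e3 u \<and> (\<forall>j\<in>{1, 2, 3} - {i}. a j = 0)}"
    then obtain e1 e3 u where a: "a = invariant_family k e1 e3 u"
      and zero: "\<forall>j\<in>{1, 2, 3} - {i}. invariant_family k e1 e3 u j = 0"
      by blast
    show "a \<in> {(\<lambda>j. t * basis_invariant k i j) | t. True}"
      using family_vanishing_on_chain[OF kpos i zero] family_on_chain_is_basis[OF kpos i] a by auto
  next
    fix a assume "a \<in> {(\<lambda>j. t * basis_invariant k i j) | t. True}"
    then obtain t where a: "a = (\<lambda>j. t * basis_invariant k i j)"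
      by blast
    have "\<forall>j\<in>{1, 2, 3} - {i}. a j = 0"
      unfolding a basis_invariant_def using i by auto
    moreover have "a = invariant_family k (chain_e1 k i * t) (chain_e3 k i * t) t"
      unfolding a family_on_chain_is_basis[OF kpos i] ..
    ultimately show "a \<in> {a. \<exists>e1 e3 u. a = invariant_family k e1 e3 u \<and> (\<forall>j\<in>{1, 2, 3} - {i}. a j = 0)}"
      by blast
  qed
  finally show ?thesis .
qed

(* Part (i): an invariant on {C7, C8, C11, C14} is an invariant on {C3, C7, C8, C11, C14}
   with zero C3-entry, i.e. t times the basis invariant with t * k5 = 0, so it is zero. *)
lemma no_type1_invariants_off_chain:
  assumes kpos: "\<forall>i\<in>{1..16}. k i > 0"
  shows "type1_invariants k {7, 8, 11, 14} = {\<lambda>_. 0}"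
proof -
  have "k 5 > 0"
    using kpos by auto
  then have "t * basis_invariant k 3 3 = 0 \<longleftrightarrow> t = 0" for t
    by (simp add: basis_invariant_def chain_coeff_def)
  then have "{a \<in> {(\<lambda>j. t * basis_invariant k 3 j) | t. True}. \<forall>j\<in>{3}. a j = 0} = {\<lambda>_. 0}"
    by (auto intro!: exI[of _ "0::real"])
  moreover have "{3, 7, 8, 11, 14} - {7, 8, 11, 14} = {3 :: nat}"
    by auto
  moreover have "type1_invariants k {3, 7, 8, 11, 14} = {(\<lambda>j. t * basis_invariant k 3 j) | t. True}"
    using type1_invariants_one_chain_complex[OF kpos] by simp
  ultimately show ?thesis
    using type1_invariants_restrict[of "{7, 8, 11, 14}" "{3, 7, 8, 11, 14}" k] by simp
qed

lemma basis_invariant_at_steady_state: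
  assumes kpos: "\<forall>i\<in>{1..16}. k i > 0" and i: "i \<in> {1, 2, 3}" and x: "steady_state k x"
  shows "k 16 * Psi x 14 - chain_coeff k i * Psi x i + k 10 * k 12 / (k 11 + k 12) * Psi x 8
    + k 13 * k 15 / (k 14 + k 15) * Psi x 11 = 0"
proof -
  have "basis_invariant k i \<in> type1_invariants k {i, 7, 8, 11, 14}"
    unfolding type1_invariants_one_chain_complex[OF kpos i] by (auto intro!: exI[of _ 1])
  then have "(\<Sum>j\<in>{1..15}. basis_invariant k i j * Psi x j) = 0"
    using row_span_vanishes_at_steady_state x unfolding type1_invariants_def by blast
  then show ?thesis
    using i unfolding complexes_range basis_invariant_def by auto
qed

theorem mainTheorem8:
  fixes k :: "nat \<Rightarrow> real"
  assumes kpos: "\<forall>i\<in>{1..16}. k i > 0"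
  defines "A \<equiv> k 10 * k 12 / (k 11 + k 12)"
      and "B \<equiv> k 13 * k 15 / (k 14 + k 15)"
      and "c1 \<equiv> k 1 * k 3 * k 5 / (k 2 * (k 4 + k 5))"
      and "c2 \<equiv> k 3 * k 5 / (k 4 + k 5)"
      and "c3 \<equiv> k 5"
  shows "type1_invariants k {7, 8, 11, 14} = {\<lambda>_. 0}
    \<and> (\<forall>i\<in>{1, 2, 3}.
         let ci = (if i = 1 then c1 else if i = 2 then c2 else c3);
             v = (\<lambda>_. 0)(i := - ci, 8 := A, 11 := B, 14 := k 16)
         in v \<noteq> (\<lambda>_. 0)
            \<and> type1_invariants k {i, 7, 8, 11, 14} = {(\<lambda>j. t * v j) | t. True}
            \<and> (\<forall>x. steady_state k x \<longrightarrow>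
                 k 16 * Psi x 14 - ci * Psi x i + A * Psi x 8 + B * Psi x 11 = 0))"
proof -
  have coeff: "(if i = 1 then c1 else if i = 2 then c2 else c3) = chain_coeff k i" for i
    unfolding c1_def c2_def c3_def chain_coeff_def by simp
  have basis: "(\<lambda>_. 0)(i := - chain_coeff k i, 8 := A, 11 := B, 14 := k 16) = basis_invariant k i" for i
    unfolding A_def B_def basis_invariant_def ..
  have "basis_invariant k i 14 = k 16" and "k 16 > 0" for i
    using kpos by (auto simp: basis_invariant_def)
  then have nonzero: "basis_invariant k i \<noteq> (\<lambda>_. 0)" for i
    by (metis less_irrefl)
  show ?thesis
    unfolding Let_def coeff basis
    using no_type1_invariants_off_chain[OF kpos] type1_invariants_one_chain_complex[OF kpos]
      basis_invariant_at_steady_state[OF kpos] nonzero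
    unfolding A_def B_def by auto
qed

end
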